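(* Let $1<p<\infty$, $k\in\mathbb N$, and $\delta,c_1,\dots,c_k>0$. Suppose $l\in\mathbb N$ satisfies $l\left(\frac{\min(c_1,\dots,c_k)}{\max(c_1,\dots,c_k)}\right)^p\ge1$. Let $(\Omega,\Sigma,\mu)$ be any measure space and let $f_1,\dots,f_l$ be pairwise disjoint functions in $L^{p,\infty}(\Omega,\Sigma,\mu)$ such that $|f_j|\ge\sum_{m=1}^k c_m\chi_{\sigma(m,j)}$ for each $j$, where for each $j$ the sets $\sigma(1,j),\dots,\sigma(k,j)\in\Sigma$ are pairwise disjoint with $\mu(\sigma(m,j))>(\delta/c_m)^p$ for $1\le m\le k$. Then $$\Big\|\sum_{j=1}^l j^{-1/p}f_j\Big\|\ge\Big(\frac k2\Big)^{1/p}\delta.$$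
   Context: $L^{p,\infty}(\Omega,\Sigma,\mu)$ is the space of (equivalence classes of) measurable $f$ with $\|f\|=\sup_{c>0}c\,(\mu\{|f|>c\})^{1/p}<\infty$; here $\|\cdot\|$ denotes exactly this quasi-norm. Functions $f,g$ are disjoint if $|f|\wedge|g|=0$. *)

theory Defs
  imports "HOL-Analysis.Analysis"
begin

definition weak_Lp_norm :: "'a measure \<Rightarrow> real \<Rightarrow> ('a \<Rightarrow> real) \<Rightarrow> ennreal" where
  "weak_Lp_norm M p f =
     (SUP c\<in>{0<..}. (let d = emeasure M {x \<in> space M. c < \<bar>f x\<bar>} in
        if d = \<infinity> then \<infinity> else ennreal (c * (enn2real d) powr (1 / p))))"

definition weak_Lp :: "'a measure \<Rightarrow> real \<Rightarrow> ('a \<Rightarrow> real) set" where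
  "weak_Lp M p = {f. f \<in> borel_measurable M \<and> weak_Lp_norm M p f < \<infinity>}"

text \<open>Disjointness in the lattice sense (for equivalence classes): |f| inf |g| = 0 a.e.\<close>
definition disjoint_fun :: "'a measure \<Rightarrow> ('a \<Rightarrow> real) \<Rightarrow> ('a \<Rightarrow> real) \<Rightarrow> bool" where
  "disjoint_fun M f g \<longleftrightarrow> (AE x in M. min \<bar>f x\<bar> \<bar>g x\<bar> = 0)"

end

theory Submission
  imports Defs
begin

(* Take the level t = max c / (2 l)^(1/p). The hypothesis on l places (c_m / t)^p in (1, 2 l],
   so at least (c_m / t)^p / 2 indices j \<le> l satisfy j^(-1/p) c_m > t. For each such pair (m, j),
   disjointness of the f_i leaves only the j-th term of F = \<Sum>_j j^(-1/p) f_j on \<sigma>(m, j), so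
   |F| > t there, and these sets are almost everywhere disjoint. Hence
   \<mu>{|F| > t} \<ge> \<Sum>_m (c_m / t)^p / 2 * (\<delta> / c_m)^p = (k / 2) (\<delta> / t)^p,
   and t \<mu>{|F| > t}^(1/p) \<ge> (k / 2)^(1/p) \<delta>. *)

lemma card_nat_less_ge_half:
  fixes X :: real
  assumes "1 < X" "X \<le> 2 * real l"
  shows "X / 2 \<le> real (card {j \<in> {1..l}. real j < X})"
proof -
  define n where "n = min l (nat (\<lceil>X\<rceil> - 1))"
  have "{1..n} \<subseteq> {j \<in> {1..l}. real j < X}"
    by (auto simp: n_def) linarith
  then have "n \<le> card {j \<in> {1..l}. real j < X}"
    using card_mono[of "{j \<in> {1..l}. real j < X}" "{1..n}"] by simp
  moreover have "X / 2 \<le> real n"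
  proof -
    have "X \<le> of_int \<lceil>X\<rceil>" and ceil: "2 \<le> \<lceil>X\<rceil>"
      using assms(1) by auto
    moreover have "real n = min (real l) (of_int \<lceil>X\<rceil> - 1)"
      using ceil by (simp add: n_def of_nat_min)
    ultimately show ?thesis
      using assms(2) by linarith
  qed
  ultimately show ?thesis by linarith
qed

lemma less_powr_neg_mult_iff:
  fixes p t a x :: real
  assumes "0 < p" "0 < t" "0 < a" "0 < x"
  shows "t < x powr (-1 / p) * a \<longleftrightarrow> x < (a / t) powr p"
proof -
  have "x powr (-1 / p) * a = a / x powr (1 / p)"
    using powr_minus_divide[of x "1 / p"] by simp
  moreover have "t < a / y \<longleftrightarrow> y < a / t" if "0 < y" for y
    using that assms(2) by (simp add: field_simps)
  ultimately have "t < x powr (-1 / p) * a \<longleftrightarrow> x powr (1 / p) < a / t"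
    using assms(4) by simp
  also have "\<dots> \<longleftrightarrow> (x powr (1 / p)) powr p < (a / t) powr p"
    using assms by (auto intro: powr_less_mono2 powr_less_cancel2)
  also have "(x powr (1 / p)) powr p = x"
    using assms by (simp add: powr_powr)
  finally show ?thesis .
qed

lemma card_weights_above_threshold_ge:
  fixes p t a :: real
  assumes "0 < p" "0 < t" "t < a" "a \<le> (2 * real l) powr (1 / p) * t"
  shows "(a / t) powr p / 2 \<le> real (card {j \<in> {1..l}. t < real j powr (-1 / p) * a})"
proof -
  have "{j \<in> {1..l}. t < real j powr (-1 / p) * a} = {j \<in> {1..l}. real j < (a / t) powr p}"
    using assms(1-3) by (intro Collect_cong conj_cong refl less_powr_neg_mult_iff) auto
  moreover have "1 < (a / t) powr p"
    using assms(1-3) by (intro gr_one_powr) auto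
  moreover have "(a / t) powr p \<le> ((2 * real l) powr (1 / p)) powr p"
    using assms by (intro powr_mono2) (auto simp: divide_le_eq)
  moreover have "((2 * real l) powr (1 / p)) powr p = 2 * real l"
    using assms(1) by (simp add: powr_powr)
  ultimately show ?thesis
    using card_nat_less_ge_half by simp
qed

lemma threshold_bounds:
  fixes c :: "'i \<Rightarrow> real" and p :: real
  assumes "finite K" "K \<noteq> {}" "\<And>m. m \<in> K \<Longrightarrow> 0 < c m" "0 < p"
    and "1 \<le> real l * (Min (c ` K) / Max (c ` K)) powr p"
  defines "t \<equiv> Max (c ` K) / (2 * real l) powr (1 / p)"
  shows "0 < t" and "\<And>m. m \<in> K \<Longrightarrow> t < c m \<and> c m \<le> (2 * real l) powr (1 / p) * t"
proof -
  have l: "0 < l"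
    using assms(5) by (cases l) auto
  have Min_pos: "0 < Min (c ` K)" and Max_pos: "0 < Max (c ` K)"
    using assms(1-3) by (auto simp: Max_gr_iff)
  then show "0 < t"
    using l by (simp add: t_def)
  have Max_le: "Max (c ` K) powr p \<le> real l * Min (c ` K) powr p"
    using assms(5) Min_pos Max_pos by (simp add: powr_divide field_simps)
  have "t powr p = Max (c ` K) powr p / (2 * real l)"
    using assms(4) by (simp add: t_def powr_divide powr_powr)
  also have "\<dots> \<le> real l * Min (c ` K) powr p / (2 * real l)"
    using Max_le by (rule divide_right_mono) simp
  also have "\<dots> < Min (c ` K) powr p"
    using l Min_pos by simp
  finally have "t powr p < Min (c ` K) powr p" .
  then have "t < Min (c ` K)"
    using powr_less_cancel2 assms(4) Min_pos \<open>0 < t\<close> by blast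
  moreover have "(2 * real l) powr (1 / p) * t = Max (c ` K)"
    using l by (simp add: t_def)
  ultimately show "t < c m \<and> c m \<le> (2 * real l) powr (1 / p) * t" if "m \<in> K" for m
    using that assms(1) by (auto intro: order.strict_trans2)
qed

lemma sum_card_weights_above_threshold_ge:
  fixes p t \<delta> :: real and c :: "'i \<Rightarrow> real"
  assumes "finite K" "0 < p" "0 < t" "0 \<le> \<delta>"
    and "\<And>m. m \<in> K \<Longrightarrow> t < c m \<and> c m \<le> (2 * real l) powr (1 / p) * t"
  shows "real (card K) / 2 * (\<delta> / t) powr p \<le>
    (\<Sum>(m, j)\<in>(SIGMA m:K. {j \<in> {1..l}. t < real j powr (-1 / p) * c m}). (\<delta> / c m) powr p)"
proof -
  have "(\<delta> / t) powr p / 2 \<le>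
      real (card {j \<in> {1..l}. t < real j powr (-1 / p) * c m}) * (\<delta> / c m) powr p"
    if m: "m \<in> K" for m
  proof -
    have "(\<delta> / t) powr p = (c m / t) powr p * (\<delta> / c m) powr p"
      using assms(3,4) assms(5)[OF m] by (simp add: powr_mult[symmetric])
    moreover have "(c m / t) powr p / 2 \<le> real (card {j \<in> {1..l}. t < real j powr (-1 / p) * c m})"
      using card_weights_above_threshold_ge[OF assms(2,3)] assms(5)[OF m] by blast
    then have "(c m / t) powr p / 2 * (\<delta> / c m) powr p \<le>
        real (card {j \<in> {1..l}. t < real j powr (-1 / p) * c m}) * (\<delta> / c m) powr p"
      by (rule mult_right_mono) simp
    ultimately show ?thesis
      by simp
  qed
  then have "(\<Sum>m\<in>K. (\<delta> / t) powr p / 2) \<le>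
      (\<Sum>m\<in>K. real (card {j \<in> {1..l}. t < real j powr (-1 / p) * c m}) * (\<delta> / c m) powr p)"
    by (rule sum_mono)
  then show ?thesis
    using assms(1) by (simp add: sum.Sigma[symmetric])
qed

lemma sum_emeasure_le_AE_disjoint:
  assumes "finite S" "B ` S \<subseteq> sets M" "A \<in> sets M"
    and "AE x in M. \<forall>s\<in>S. x \<in> B s \<longrightarrow> x \<in> A \<and> (\<forall>s'\<in>S. x \<in> B s' \<longrightarrow> s' = s)"
  shows "(\<Sum>s\<in>S. emeasure M (B s)) \<le> emeasure M A"
proof -
  obtain N where N: "N \<in> null_sets M"
    and good: "\<And>x. x \<in> space M - N \<Longrightarrow> \<forall>s\<in>S. x \<in> B s \<longrightarrow> x \<in> A \<and> (\<forall>s'\<in>S. x \<in> B s' \<longrightarrow> s' = s)"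
    using assms(4) by (rule AE_E3) blast
  have B_space: "B s \<subseteq> space M" if "s \<in> S" for s
    using assms(2) that sets.sets_into_space by blast
  have "(\<Sum>s\<in>S. emeasure M (B s)) = (\<Sum>s\<in>S. emeasure M (B s - N))"
    using assms(2) N by (intro sum.cong refl) (auto simp: emeasure_Diff_null_set)
  also have "\<dots> = emeasure M (\<Union>s\<in>S. B s - N)"
  proof (rule sum_emeasure)
    show "(\<lambda>s. B s - N) ` S \<subseteq> sets M"
      using assms(2) N by auto
    show "disjoint_family_on (\<lambda>s. B s - N) S"
      using good B_space unfolding disjoint_family_on_def by blast
  qed (fact assms(1))
  also have "\<dots> \<le> emeasure M A"
    using assms(3) good B_space by (intro emeasure_mono) auto
  finally show ?thesis .
qed

lemma single_support_of_lower_bound: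
  fixes c :: "'m \<Rightarrow> real" and f :: "'j \<Rightarrow> real"
  assumes "finite K" "\<And>m. m \<in> K \<Longrightarrow> 0 < c m"
    and "\<And>i. i \<in> I \<Longrightarrow> i \<noteq> j \<Longrightarrow> min \<bar>f i\<bar> \<bar>f j\<bar> = 0"
    and "(\<Sum>m\<in>K. c m * indicator (\<sigma> m) x) \<le> \<bar>f j\<bar>"
    and "m \<in> K" "x \<in> \<sigma> m"
  shows "c m \<le> \<bar>f j\<bar>" and "\<And>i. i \<in> I \<Longrightarrow> i \<noteq> j \<Longrightarrow> f i = 0"
proof -
  have "c m * indicator (\<sigma> m) x \<le> (\<Sum>m\<in>K. c m * indicator (\<sigma> m) x)"
    using assms(1,2,5) by (intro member_le_sum) (auto simp: indicator_def less_imp_le)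
  then show "c m \<le> \<bar>f j\<bar>"
    using assms(4,6) by simp
  then show "f i = 0" if "i \<in> I" "i \<noteq> j" for i
    using assms(3)[OF that] assms(2)[OF assms(5)] by (auto simp: min_def split: if_splits)
qed

lemma AE_blocks_disjoint_in_level_set:
  fixes c :: "'m \<Rightarrow> real" and w :: "'j \<Rightarrow> real" and f :: "'j \<Rightarrow> 'a \<Rightarrow> real"
    and \<sigma> :: "'m \<Rightarrow> 'j \<Rightarrow> 'a set"
  assumes "finite K" "finite I" "\<And>m. m \<in> K \<Longrightarrow> 0 < c m" "\<And>j. j \<in> I \<Longrightarrow> 0 \<le> w j"
    and \<sigma>_disj: "\<And>m m' j. m \<in> K \<Longrightarrow> m' \<in> K \<Longrightarrow> j \<in> I \<Longrightarrow> m \<noteq> m' \<Longrightarrow> \<sigma> m j \<inter> \<sigma> m' j = {}"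
    and f_disj: "\<And>i j. i \<in> I \<Longrightarrow> j \<in> I \<Longrightarrow> i \<noteq> j \<Longrightarrow> AE x in M. min \<bar>f i x\<bar> \<bar>f j x\<bar> = 0"
    and f_lower: "\<And>j. j \<in> I \<Longrightarrow> AE x in M. (\<Sum>m\<in>K. c m * indicator (\<sigma> m j) x) \<le> \<bar>f j x\<bar>"
    and S: "\<And>m j. (m, j) \<in> S \<Longrightarrow> m \<in> K \<and> j \<in> I \<and> t < w j * c m"
  shows "AE x in M. \<forall>(m, j)\<in>S. x \<in> \<sigma> m j \<longrightarrow>
    t < \<bar>\<Sum>i\<in>I. w i * f i x\<bar> \<and> (\<forall>(m', j')\<in>S. x \<in> \<sigma> m' j' \<longrightarrow> (m', j') = (m, j))"
proof -
  have "AE x in M. \<forall>j\<in>I. (\<Sum>m\<in>K. c m * indicator (\<sigma> m j) x) \<le> \<bar>f j x\<bar>"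
    using f_lower assms(2) by (simp add: AE_finite_all)
  moreover have "AE x in M. \<forall>j\<in>I. \<forall>i\<in>I. i \<noteq> j \<longrightarrow> min \<bar>f i x\<bar> \<bar>f j x\<bar> = 0"
    using f_disj assms(2) by (simp add: AE_finite_all)
  ultimately show ?thesis
  proof eventually_elim
    case (elim x)
    have support: "c m \<le> \<bar>f j x\<bar> \<and> (\<forall>i\<in>I. i \<noteq> j \<longrightarrow> f i x = 0)"
      if "(m, j) \<in> S" "x \<in> \<sigma> m j" for m j
    proof -
      have m: "m \<in> K" and j: "j \<in> I"
        using S[OF that(1)] by auto
      have lower: "(\<Sum>m\<in>K. c m * indicator (\<sigma> m j) x) \<le> \<bar>f j x\<bar>"
        using elim(1) j by blast
      have disj: "min \<bar>f i x\<bar> \<bar>f j x\<bar> = 0" if "i \<in> I" "i \<noteq> j" for i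
        using elim(2) j that by blast
      note single_support_of_lower_bound[where f = "\<lambda>i. f i x" and \<sigma> = "\<lambda>m. \<sigma> m j",
          OF assms(1,3) disj lower m that(2)]
      then show ?thesis
        by blast
    qed
    have level: "t < \<bar>\<Sum>i\<in>I. w i * f i x\<bar>" if mj: "(m, j) \<in> S" "x \<in> \<sigma> m j" for m j
    proof -
      have "(\<Sum>i\<in>I. w i * f i x) = (\<Sum>i\<in>I. if i = j then w j * f j x else 0)"
        using support[OF mj] by (intro sum.cong) auto
      also have "\<dots> = w j * f j x"
        using S[OF mj(1)] assms(2) by simp
      finally have "\<bar>\<Sum>i\<in>I. w i * f i x\<bar> = w j * \<bar>f j x\<bar>"
        using S[OF mj(1)] assms(4) by (simp add: abs_mult)
      moreover have "w j * c m \<le> w j * \<bar>f j x\<bar>"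
        using support[OF mj] S[OF mj(1)] assms(4) by (simp add: mult_left_mono)
      ultimately show ?thesis
        using S[OF mj(1)] by linarith
    qed
    have unique: "(m', j') = (m, j)"
      if mj: "(m, j) \<in> S" "x \<in> \<sigma> m j" and mj': "(m', j') \<in> S" "x \<in> \<sigma> m' j'" for m j m' j'
    proof -
      have "j' = j"
        using support[OF mj] support[OF mj'] S[OF mj(1)] S[OF mj'(1)] assms(3) by force
      then show ?thesis
        using \<sigma>_disj[of m m' j] mj mj' S[OF mj(1)] S[OF mj'(1)] by blast
    qed
    show ?case
      using level unique by blast
  qed
qed

lemma sum_emeasure_blocks_le_level_set:
  fixes c :: "'m \<Rightarrow> real" and w :: "'j \<Rightarrow> real" and f :: "'j \<Rightarrow> 'a \<Rightarrow> real"
    and \<sigma> :: "'m \<Rightarrow> 'j \<Rightarrow> 'a set"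
  assumes "finite K" "finite I" "\<And>m. m \<in> K \<Longrightarrow> 0 < c m" "\<And>j. j \<in> I \<Longrightarrow> 0 \<le> w j"
    and "\<And>j. j \<in> I \<Longrightarrow> f j \<in> borel_measurable M"
    and "\<And>m j. m \<in> K \<Longrightarrow> j \<in> I \<Longrightarrow> \<sigma> m j \<in> sets M"
    and "\<And>m m' j. m \<in> K \<Longrightarrow> m' \<in> K \<Longrightarrow> j \<in> I \<Longrightarrow> m \<noteq> m' \<Longrightarrow> \<sigma> m j \<inter> \<sigma> m' j = {}"
    and "\<And>i j. i \<in> I \<Longrightarrow> j \<in> I \<Longrightarrow> i \<noteq> j \<Longrightarrow> AE x in M. min \<bar>f i x\<bar> \<bar>f j x\<bar> = 0"
    and "\<And>j. j \<in> I \<Longrightarrow> AE x in M. (\<Sum>m\<in>K. c m * indicator (\<sigma> m j) x) \<le> \<bar>f j x\<bar>"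
    and S: "\<And>m j. (m, j) \<in> S \<Longrightarrow> m \<in> K \<and> j \<in> I \<and> t < w j * c m"
  shows "(\<Sum>(m, j)\<in>S. emeasure M (\<sigma> m j)) \<le> emeasure M {x \<in> space M. t < \<bar>\<Sum>i\<in>I. w i * f i x\<bar>}"
proof -
  let ?A = "{x \<in> space M. t < \<bar>\<Sum>i\<in>I. w i * f i x\<bar>}"
  have "S \<subseteq> K \<times> I"
    using S by auto
  then have "finite S"
    using assms(1,2) finite_subset by blast
  moreover have "case_prod \<sigma> ` S \<subseteq> sets M"
    using S assms(6) by auto
  moreover have "(\<lambda>x. \<Sum>i\<in>I. w i * f i x) \<in> borel_measurable M"
    using assms(5) by (intro borel_measurable_sum borel_measurable_times) auto
  then have "?A \<in> sets M"
    by measurable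
  moreover have "AE x in M. \<forall>(m, j)\<in>S. x \<in> \<sigma> m j \<longrightarrow>
      t < \<bar>\<Sum>i\<in>I. w i * f i x\<bar> \<and> (\<forall>(m', j')\<in>S. x \<in> \<sigma> m' j' \<longrightarrow> (m', j') = (m, j))"
    using assms(1-4,7-9) S by (rule AE_blocks_disjoint_in_level_set)
  with AE_space have "AE x in M. \<forall>s\<in>S. x \<in> case_prod \<sigma> s \<longrightarrow>
      x \<in> ?A \<and> (\<forall>s'\<in>S. x \<in> case_prod \<sigma> s' \<longrightarrow> s' = s)"
    by eventually_elim auto
  ultimately have "(\<Sum>s\<in>S. emeasure M (case_prod \<sigma> s)) \<le> emeasure M ?A"
    by (rule sum_emeasure_le_AE_disjoint)
  then show ?thesis
    by (simp add: case_prod_beta)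
qed

lemma weak_Lp_norm_ge_level_set:
  assumes "0 < p" "0 < t" "0 \<le> a" "ennreal a \<le> emeasure M {x \<in> space M. t < \<bar>f x\<bar>}"
  shows "ennreal (t * a powr (1 / p)) \<le> weak_Lp_norm M p f"
proof -
  let ?d = "emeasure M {x \<in> space M. t < \<bar>f x\<bar>}"
  have "ennreal (t * a powr (1 / p)) \<le>
      (if ?d = \<infinity> then \<infinity> else ennreal (t * enn2real ?d powr (1 / p)))"
  proof (cases "?d = \<infinity>")
    case False
    then have "a \<le> enn2real ?d"
      using assms(3,4) by (cases ?d) auto
    then show ?thesis
      using False assms(1-3) by (auto intro!: ennreal_leI mult_left_mono powr_mono2)
  qed simp
  also have "\<dots> \<le> weak_Lp_norm M p f"
    unfolding weak_Lp_norm_def Let_def using assms(2) by (intro SUP_upper) auto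
  finally show ?thesis .
qed

theorem lemma9:
  fixes M :: "'a measure" and p \<delta> :: real and k l :: nat
    and c :: "nat \<Rightarrow> real" and f :: "nat \<Rightarrow> 'a \<Rightarrow> real"
    and \<sigma> :: "nat \<Rightarrow> nat \<Rightarrow> 'a set"
  assumes p: "1 < p"
    and k: "1 \<le> k"
    and \<delta>: "0 < \<delta>"
    and c_pos: "\<And>m. m \<in> {1..k} \<Longrightarrow> 0 < c m"
    and l: "real l * (Min (c ` {1..k}) / Max (c ` {1..k})) powr p \<ge> 1"
    and f_weak: "\<And>j. j \<in> {1..l} \<Longrightarrow> f j \<in> weak_Lp M p"
    and f_disj: "\<And>i j. i \<in> {1..l} \<Longrightarrow> j \<in> {1..l} \<Longrightarrow> i \<noteq> j \<Longrightarrow> disjoint_fun M (f i) (f j)"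
    and \<sigma>_sets: "\<And>m j. m \<in> {1..k} \<Longrightarrow> j \<in> {1..l} \<Longrightarrow> \<sigma> m j \<in> sets M"
    and \<sigma>_disj: "\<And>m m' j. m \<in> {1..k} \<Longrightarrow> m' \<in> {1..k} \<Longrightarrow> j \<in> {1..l} \<Longrightarrow> m \<noteq> m'
                   \<Longrightarrow> \<sigma> m j \<inter> \<sigma> m' j = {}"
    and \<sigma>_meas: "\<And>m j. m \<in> {1..k} \<Longrightarrow> j \<in> {1..l} \<Longrightarrow>
                   emeasure M (\<sigma> m j) > ennreal ((\<delta> / c m) powr p)"
    and f_lower: "\<And>j. j \<in> {1..l} \<Longrightarrow>
                   AE x in M. \<bar>f j x\<bar> \<ge> (\<Sum>m=1..k. c m * indicator (\<sigma> m j) x)"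
  shows "weak_Lp_norm M p (\<lambda>x. \<Sum>j=1..l. real j powr (-1 / p) * f j x)
           \<ge> ennreal ((real k / 2) powr (1 / p) * \<delta>)"
proof -
  let ?F = "\<lambda>x. \<Sum>j=1..l. real j powr (-1 / p) * f j x"
  define t where "t = Max (c ` {1..k}) / (2 * real l) powr (1 / p)"
  define S where "S = (SIGMA m:{1..k}. {j \<in> {1..l}. t < real j powr (-1 / p) * c m})"
  have t: "0 < t" "\<And>m. m \<in> {1..k} \<Longrightarrow> t < c m \<and> c m \<le> (2 * real l) powr (1 / p) * t"
    using threshold_bounds[of "{1..k}" c p l] k c_pos p l unfolding t_def by auto
  have "real (card {1..k}) / 2 * (\<delta> / t) powr p \<le> (\<Sum>(m, j)\<in>S. (\<delta> / c m) powr p)"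
    unfolding S_def using p \<delta> t by (intro sum_card_weights_above_threshold_ge) auto
  then have "ennreal (real k / 2 * (\<delta> / t) powr p) \<le> (\<Sum>(m, j)\<in>S. ennreal ((\<delta> / c m) powr p))"
    by (auto simp: case_prod_beta intro!: ennreal_leI)
  also have "\<dots> \<le> (\<Sum>(m, j)\<in>S. emeasure M (\<sigma> m j))"
    using \<sigma>_meas by (intro sum_mono) (auto simp: S_def intro: less_imp_le)
  also have "\<dots> \<le> emeasure M {x \<in> space M. t < \<bar>?F x\<bar>}"
    using c_pos f_weak \<sigma>_sets \<sigma>_disj f_disj f_lower
    by (intro sum_emeasure_blocks_le_level_set[where K = "{1..k}" and c = c])
      (auto simp: S_def weak_Lp_def disjoint_fun_def)
  finally have "ennreal (t * (real k / 2 * (\<delta> / t) powr p) powr (1 / p)) \<le> weak_Lp_norm M p ?F"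
    using p t by (intro weak_Lp_norm_ge_level_set) auto
  moreover have "(real k / 2 * (\<delta> / t) powr p) powr (1 / p) = (real k / 2) powr (1 / p) * (\<delta> / t)"
    using p t \<delta> by (subst powr_mult) (auto simp: powr_powr)
  ultimately show ?thesis
    using t by simp
qed

end
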